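(* Let $(E,\|\cdot\|_E)$ be a fully symmetric sequence space with $E\neq l_\infty$, and let $T$ be a Dunford–Schwartz operator on $l_\infty$. Then for every $x\in E$ there exists $\widehat{x}\in E$ such that $$\Big\|\frac1n\sum_{k=0}^{n-1}T^k(x)-\widehat{x}\Big\|_\infty\to 0 \quad (n\to\infty).$$
   Context: $l_\infty$ is the Banach lattice of bounded real sequences $x=\{(x)_n\}_{n\ge1}$ with $\|x\|_\infty=\sup_n|(x)_n|$; $c_0$ is the subspace of sequences converging to $0$; $l_1$ is the space of absolutely summable sequences with $\|x\|_1=\sum_n|(x)_n|$. A linear operator $T:l_\infty\to l_\infty$ is a Dunford–Schwartz operator if $\|T(x)\|_1\le\|x\|_1$ for all $x\in l_1$ and $\|T(x)\|_\infty\le\|x\|_\infty$ for all $x\in l_\infty$. For $x\in l_\infty$, its non-increasing rearrangement is the sequence $x^*=\{(x^* )_n\}$ with $(x^* )_n=\inf\{\sup_{m\notin F}|(x)_m| : F\subset\mathbb N \text{ finite}, \operatorname{card}(F)<n\}$. A symmetric sequence space is a nonzero linear subspace $E\subset l_\infty$ with a Banach norm $\|\cdot\|_E$ such that $y\in E$, $x\in l_\infty$, $x^*\le y^*$ imply $x\in E$ and $\|x\|_E\le\|y\|_E$ (normalized so that $\|\{1,0,0,\dots\}\|_E=1$). Write $x\prec y$ if $\sum_{n=1}^k(x^* )_n\le\sum_{n=1}^k(y^* )_n$ for all $k\in\mathbb N$. A symmetric sequence space $E$ is fully symmetric if $x\in l_\infty$, $y\in E$, $x\prec y$ imply $x\in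 E$ and $\|x\|_E\le\|y\|_E$. *)

theory Defs
  imports "HOL-Analysis.Analysis"
begin

type_synonym seq = "nat \<Rightarrow> real"

definition linf :: "seq set" where
  "linf = {x. bounded (range x)}"

definition sup_norm :: "seq \<Rightarrow> real" where
  "sup_norm x = (SUP n. \<bar>x n\<bar>)"

definition l1 :: "seq set" where
  "l1 = {x. summable (\<lambda>n. \<bar>x n\<bar>)}"

definition l1_norm :: "seq \<Rightarrow> real" where
  "l1_norm x = (\<Sum>n. \<bar>x n\<bar>)"

definition dunford_schwartz :: "(seq \<Rightarrow> seq) \<Rightarrow> bool" where
  "dunford_schwartz T \<longleftrightarrow>
     (\<forall>x\<in>linf. T x \<in> linf) \<and>
     (\<forall>x\<in>linf. \<forall>y\<in>linf. T (\<lambda>i. x i + y i) = (\<lambda>i. T x i + T y i)) \<and>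
     (\<forall>x\<in>linf. \<forall>c::real. T (\<lambda>i. c * x i) = (\<lambda>i. c * T x i)) \<and>
     (\<forall>x\<in>l1. T x \<in> l1 \<and> l1_norm (T x) \<le> l1_norm x) \<and>
     (\<forall>x\<in>linf. sup_norm (T x) \<le> sup_norm x)"

text \<open>Non-increasing rearrangement, 0-indexed: entry k corresponds to the paper's
  entry n = k+1, so the finite sets F range over card F < k+1, i.e. card F \<le> k.\<close>
definition rearr :: "seq \<Rightarrow> seq" where
  "rearr x k = Inf {(SUP m\<in>- F. \<bar>x m\<bar>) | F. finite F \<and> card F \<le> k}"

definition majorized :: "seq \<Rightarrow> seq \<Rightarrow> bool" where
  "majorized x y \<longleftrightarrow> (\<forall>k. (\<Sum>i\<le>k. rearr x i) \<le> (\<Sum>i\<le>k. rearr y i))"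

definition symmetric_seq_space :: "seq set \<Rightarrow> (seq \<Rightarrow> real) \<Rightarrow> bool" where
  "symmetric_seq_space E N \<longleftrightarrow>
     E \<subseteq> linf \<and> E \<noteq> {(\<lambda>_. 0)} \<and>
     (\<lambda>_. 0) \<in> E \<and>
     (\<forall>x\<in>E. \<forall>y\<in>E. (\<lambda>i. x i + y i) \<in> E) \<and>
     (\<forall>x\<in>E. \<forall>c::real. (\<lambda>i. c * x i) \<in> E) \<and>
     (\<forall>x\<in>E. N x \<ge> 0 \<and> (N x = 0 \<longleftrightarrow> x = (\<lambda>_. 0))) \<and>
     (\<forall>x\<in>E. \<forall>y\<in>E. N (\<lambda>i. x i + y i) \<le> N x + N y) \<and>
     (\<forall>x\<in>E. \<forall>c::real. N (\<lambda>i. c * x i) = \<bar>c\<bar> * N x) \<and>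
     (\<forall>X::nat \<Rightarrow> seq. (\<forall>k. X k \<in> E) \<and>
        (\<forall>e>0. \<exists>M. \<forall>m\<ge>M. \<forall>n\<ge>M. N (\<lambda>i. X m i - X n i) < e) \<longrightarrow>
        (\<exists>x\<in>E. (\<lambda>k. N (\<lambda>i. X k i - x i)) \<longlonglongrightarrow> 0)) \<and>
     (\<forall>y\<in>E. \<forall>x\<in>linf. (\<forall>k. rearr x k \<le> rearr y k) \<longrightarrow> x \<in> E \<and> N x \<le> N y) \<and>
     N (\<lambda>n. if n = 0 then 1 else 0) = 1"

definition fully_symmetric :: "seq set \<Rightarrow> (seq \<Rightarrow> real) \<Rightarrow> bool" where
  "fully_symmetric E N \<longleftrightarrow> symmetric_seq_space E N \<and>
     (\<forall>y\<in>E. \<forall>x\<in>linf. majorized x y \<longrightarrow> x \<in> E \<and> N x \<le> N y)"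

end

theory Submission
  imports Defs
begin

text \<open>Since E \<noteq> l_infinity, every x \<in> E tends to 0. On l1 a Dunford--Schwartz operator contracts the
  l2 norm (Schur's test), so for y \<in> l1 the Cesaro averages converge in l2 by the minimal-norm
  argument of the mean ergodic theorem, hence uniformly. Approximating a null sequence uniformly by
  l1 sequences, the averages of x \<in> E converge uniformly to a null sequence xh. Each average is a
  Dunford--Schwartz image of x, and the partial sums of the rearrangement are the K-functional of
  the couple (l1, l_infinity), which Dunford--Schwartz operators do not increase. Hence xh is
  majorized by x, and xh \<in> E by full symmetry.\<close>

lemma linf_iff: "x \<in> linf \<longleftrightarrow> (\<exists>B. \<forall>i. \<bar>x i\<bar> \<le> B)"
  unfolding linf_def bounded_iff by auto

lemma linfI: "(\<And>i. \<bar>x i\<bar> \<le> B) \<Longrightarrow> x \<in> linf"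
  unfolding linf_iff by blast

lemma abs_le_sup_norm: "x \<in> linf \<Longrightarrow> \<bar>x i\<bar> \<le> sup_norm x"
  unfolding sup_norm_def linf_iff by (auto intro!: cSUP_upper bdd_aboveI)

lemma sup_norm_le: "(\<And>i. \<bar>x i\<bar> \<le> B) \<Longrightarrow> sup_norm x \<le> B"
  unfolding sup_norm_def by (rule cSUP_least) auto

lemma sup_norm_nonneg: "x \<in> linf \<Longrightarrow> 0 \<le> sup_norm x"
  using abs_le_sup_norm[of x 0] by linarith

lemma linf_add: "x \<in> linf \<Longrightarrow> y \<in> linf \<Longrightarrow> (\<lambda>i. x i + y i) \<in> linf"
  by (rule linfI[of _ "sup_norm x + sup_norm y"])
     (rule order_trans[OF abs_triangle_ineq], simp add: add_mono abs_le_sup_norm)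

lemma linf_scale: "x \<in> linf \<Longrightarrow> (\<lambda>i. c * x i) \<in> linf"
  by (rule linfI[of _ "\<bar>c\<bar> * sup_norm x"]) (simp add: abs_mult mult_left_mono abs_le_sup_norm)

lemma linf_diff: "x \<in> linf \<Longrightarrow> y \<in> linf \<Longrightarrow> (\<lambda>i. x i - y i) \<in> linf"
  using linf_add[of x "\<lambda>i. (-1) * y i"] linf_scale[of y "-1"] by simp

lemma linf_sum: "finite J \<Longrightarrow> (\<And>j. j \<in> J \<Longrightarrow> f j \<in> linf) \<Longrightarrow> (\<lambda>i. \<Sum>j\<in>J. f j i) \<in> linf"
  by (induction J rule: finite_induct) (auto intro: linfI[of _ 0] linf_add)

lemma null_seq_in_linf: "(x :: seq) \<longlonglongrightarrow> 0 \<Longrightarrow> x \<in> linf"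
  unfolding linf_def using convergent_imp_Bseq[OF convergentI] Bseq_eq_bounded by blast

lemma abs_le_l1_norm: "x \<in> l1 \<Longrightarrow> \<bar>x i\<bar> \<le> l1_norm x"
  unfolding l1_def l1_norm_def using sum_le_suminf[of "\<lambda>n. \<bar>x n\<bar>" "{i}"] by auto

lemma sum_abs_le_l1_norm: "x \<in> l1 \<Longrightarrow> finite S \<Longrightarrow> (\<Sum>m\<in>S. \<bar>x m\<bar>) \<le> l1_norm x"
  unfolding l1_def l1_norm_def by (auto intro!: sum_le_suminf)

lemma l1_norm_nonneg: "x \<in> l1 \<Longrightarrow> 0 \<le> l1_norm x"
  unfolding l1_norm_def l1_def by (auto intro: suminf_nonneg)

lemma l1_subset_linf: "l1 \<subseteq> linf"
  using abs_le_l1_norm linfI by blast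

lemma l1_imp_null: "x \<in> l1 \<Longrightarrow> x \<longlonglongrightarrow> 0"
  unfolding l1_def by (auto dest: summable_LIMSEQ_zero simp: tendsto_rabs_zero_iff)

lemma l1_add: "x \<in> l1 \<Longrightarrow> y \<in> l1 \<Longrightarrow> (\<lambda>i. x i + y i) \<in> l1"
  unfolding l1_def mem_Collect_eq
  by (rule summable_comparison_test'[OF summable_add[of "\<lambda>n. \<bar>x n\<bar>" "\<lambda>n. \<bar>y n\<bar>"]]) auto

lemma l1_norm_add_le: "x \<in> l1 \<Longrightarrow> y \<in> l1 \<Longrightarrow> l1_norm (\<lambda>i. x i + y i) \<le> l1_norm x + l1_norm y"
  using l1_add[of x y] unfolding l1_norm_def l1_def
  by (auto simp: suminf_add intro!: suminf_le summable_add)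

lemma l1_scale: "x \<in> l1 \<Longrightarrow> (\<lambda>i. c * x i) \<in> l1"
  unfolding l1_def by (auto simp: abs_mult intro: summable_mult)

lemma l1_norm_scale: "x \<in> l1 \<Longrightarrow> l1_norm (\<lambda>i. c * x i) = \<bar>c\<bar> * l1_norm x"
  unfolding l1_def l1_norm_def by (auto simp: abs_mult intro: suminf_mult)

lemma l1_diff: "x \<in> l1 \<Longrightarrow> y \<in> l1 \<Longrightarrow> (\<lambda>i. x i - y i) \<in> l1"
  using l1_add[of x "\<lambda>i. (-1) * y i"] l1_scale[of y "-1"] by simp

lemma l1_sum: "finite J \<Longrightarrow> (\<And>j. j \<in> J \<Longrightarrow> f j \<in> l1) \<Longrightarrow> (\<lambda>i. \<Sum>j\<in>J. f j i) \<in> l1"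
proof (induction J rule: finite_induct)
  case empty
  then show ?case by (simp add: l1_def)
next
  case (insert a J)
  then show ?case using l1_add[of "f a" "\<lambda>i. \<Sum>j\<in>J. f j i"] by simp
qed

lemma l1_norm_sum_le: "finite J \<Longrightarrow> (\<And>j. j \<in> J \<Longrightarrow> f j \<in> l1) \<Longrightarrow>
    l1_norm (\<lambda>i. \<Sum>j\<in>J. f j i) \<le> (\<Sum>j\<in>J. l1_norm (f j))"
proof (induction J rule: finite_induct)
  case empty
  then show ?case by (simp add: l1_norm_def)
next
  case (insert a J)
  then show ?case
    using l1_norm_add_le[of "f a" "\<lambda>i. \<Sum>j\<in>J. f j i"] l1_sum[of J f] by auto
qed

lemma finite_support_l1:
  assumes "finite {i. x i \<noteq> 0}"
  shows "x \<in> l1" "l1_norm x = (\<Sum>i\<in>{i. x i \<noteq> 0}. \<bar>x i\<bar>)"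
proof -
  have "(\<lambda>n. \<bar>x n\<bar>) sums (\<Sum>i\<in>{i. x i \<noteq> 0}. \<bar>x i\<bar>)"
    by (rule sums_finite[OF assms]) auto
  then show "x \<in> l1" "l1_norm x = (\<Sum>i\<in>{i. x i \<noteq> 0}. \<bar>x i\<bar>)"
    unfolding l1_def l1_norm_def by (auto simp: sums_iff)
qed

lemma null_seq_approx_l1:
  assumes "(x :: seq) \<longlonglongrightarrow> 0" "0 < e"
  obtains y where "y \<in> l1" "\<And>i. \<bar>x i - y i\<bar> \<le> e"
proof -
  obtain N where N: "\<And>n. n \<ge> N \<Longrightarrow> \<bar>x n\<bar> < e"
    using assms unfolding LIMSEQ_iff by auto
  define y where "y i = (if i < N then x i else 0)" for i
  have "{i. y i \<noteq> 0} \<subseteq> {..<N}" unfolding y_def by auto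
  then have "y \<in> l1" by (intro finite_support_l1) (rule finite_subset, auto)
  moreover have "\<bar>x i - y i\<bar> \<le> e" for i
    using N[of i] assms(2) by (cases "i < N") (auto simp: y_def)
  ultimately show thesis by (rule that)
qed

lemma null_seq_if_uniform_approx:
  assumes "\<And>e. 0 < e \<Longrightarrow> \<exists>y. y \<longlonglongrightarrow> 0 \<and> (\<forall>i. \<bar>x i - y i\<bar> \<le> e)"
  shows "(x :: seq) \<longlonglongrightarrow> 0"
proof (rule LIMSEQ_I)
  fix e :: real assume "0 < e"
  then obtain y where y: "y \<longlonglongrightarrow> 0" "\<And>i. \<bar>x i - y i\<bar> \<le> e / 2"
    using assms[of "e / 2"] by auto
  then obtain K where K: "\<And>i. i \<ge> K \<Longrightarrow> \<bar>y i\<bar> < e / 2"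
    using \<open>0 < e\<close> unfolding LIMSEQ_iff by (metis half_gt_zero real_norm_def diff_zero)
  show "\<exists>K. \<forall>i\<ge>K. norm (x i - 0) < e"
  proof (intro exI allI impI)
    fix i assume "K \<le> i"
    then show "norm (x i - 0) < e" using K[of i] y(2)[of i] abs_triangle_ineq2[of "x i" "y i"] by simp
  qed
qed

lemma sup_norm_diff_tendsto_zero:
  assumes "\<And>e. 0 < e \<Longrightarrow> \<exists>M. \<forall>n\<ge>M. \<forall>i. \<bar>f n i - g i\<bar> < e"
  shows "(\<lambda>n. sup_norm (\<lambda>i. f n i - g i)) \<longlonglongrightarrow> 0"
proof (rule LIMSEQ_I)
  fix e :: real assume "0 < e"
  then obtain M where M: "\<And>n i. M \<le> n \<Longrightarrow> \<bar>f n i - g i\<bar> < e / 2"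
    using assms[of "e / 2"] by auto
  have "\<bar>sup_norm (\<lambda>i. f n i - g i)\<bar> < e" if "M \<le> n" for n
  proof -
    have bound: "\<bar>f n i - g i\<bar> \<le> e / 2" for i using M[OF that, of i] by simp
    have "sup_norm (\<lambda>i. f n i - g i) \<le> e / 2" by (rule sup_norm_le) (rule bound)
    moreover have "0 \<le> sup_norm (\<lambda>i. f n i - g i)" using bound by (intro sup_norm_nonneg linfI)
    ultimately show ?thesis using \<open>0 < e\<close> by simp
  qed
  then show "\<exists>M. \<forall>n\<ge>M. norm (sup_norm (\<lambda>i. f n i - g i) - 0) < e" by auto
qed

section \<open>The non-increasing rearrangement\<close>

lemma abs_le_Sup_compl: "x \<in> linf \<Longrightarrow> m \<notin> F \<Longrightarrow> \<bar>x m\<bar> \<le> (SUP m\<in>- F. \<bar>x m\<bar>)"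
  by (rule cSUP_upper) (auto intro!: bdd_aboveI[of _ "sup_norm x"] abs_le_sup_norm)

lemma Sup_compl_nonneg: "x \<in> linf \<Longrightarrow> finite (F :: nat set) \<Longrightarrow> 0 \<le> (SUP m\<in>- F. \<bar>x m\<bar>)"
proof -
  assume "x \<in> linf" "finite F"
  then obtain m where "m \<notin> F" using ex_new_if_finite[OF infinite_UNIV_nat] by blast
  then show ?thesis using abs_le_Sup_compl[OF \<open>x \<in> linf\<close>, of m F] by linarith
qed

lemma rearr_set_nonempty: "{(SUP m\<in>- F. \<bar>x m\<bar>) | F. finite F \<and> card F \<le> k} \<noteq> {}"
proof -
  have "(SUP m\<in>- {}. \<bar>x m\<bar>) \<in> {(SUP m\<in>- F. \<bar>x m\<bar>) | F. finite F \<and> card F \<le> k}"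
    by (intro CollectI exI[of _ "{}"]) simp
  then show ?thesis by blast
qed

lemma rearr_set_nonneg:
  "x \<in> linf \<Longrightarrow> r \<in> {(SUP m\<in>- F. \<bar>x m\<bar>) | F. finite F \<and> card F \<le> k} \<Longrightarrow> 0 \<le> r"
  by (clarsimp simp only: Sup_compl_nonneg)

lemma rearr_nonneg: "x \<in> linf \<Longrightarrow> 0 \<le> rearr x k"
  unfolding rearr_def by (rule cInf_greatest[OF rearr_set_nonempty rearr_set_nonneg])

lemma rearr_le_Sup_compl:
  "x \<in> linf \<Longrightarrow> finite F \<Longrightarrow> card F \<le> k \<Longrightarrow> rearr x k \<le> (SUP m\<in>- F. \<bar>x m\<bar>)"
  unfolding rearr_def by (rule cInf_lower) (auto intro!: bdd_belowI rearr_set_nonneg)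

lemma rearr_le_sup_norm: "x \<in> linf \<Longrightarrow> rearr x k \<le> sup_norm x"
  using rearr_le_Sup_compl[of x "{}" k] by (simp add: sup_norm_def)

lemma rearr_antimono: "x \<in> linf \<Longrightarrow> i \<le> k \<Longrightarrow> rearr x k \<le> rearr x i"
  unfolding rearr_def
  by (rule cInf_superset_mono[OF rearr_set_nonempty]) (auto intro!: bdd_belowI rearr_set_nonneg)

lemma le_rearr_if_card_gt:
  assumes "x \<in> linf" "finite G" "k < card G" "\<And>i. i \<in> G \<Longrightarrow> s \<le> \<bar>x i\<bar>"
  shows "s \<le> rearr x k"
  unfolding rearr_def
proof (rule cInf_greatest)
  show "{(SUP m\<in>- F. \<bar>x m\<bar>) | F. finite F \<and> card F \<le> k} \<noteq> {}"
    by (rule rearr_set_nonempty)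
  fix r assume "r \<in> {(SUP m\<in>- F. \<bar>x m\<bar>) | F. finite F \<and> card F \<le> k}"
  then obtain F where F: "finite F" "card F \<le> k" "r = (SUP m\<in>- F. \<bar>x m\<bar>)" by auto
  have "\<not> G \<subseteq> F"
    using card_mono[OF F(1), of G] F(2) assms(3) by linarith
  then obtain m where "m \<in> G" "m \<notin> F" by blast
  then show "s \<le> r" using assms(4)[of m] abs_le_Sup_compl[OF assms(1), of m F] F(3) by linarith
qed

lemma le_rearr_if_infinite:
  assumes "x \<in> linf" "infinite {i. s \<le> \<bar>x i\<bar>}"
  shows "s \<le> rearr x k"
proof -
  obtain G where "G \<subseteq> {i. s \<le> \<bar>x i\<bar>}" "finite G" "card G = Suc k"
    using infinite_arbitrarily_large[OF assms(2)] by blast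
  then show ?thesis by (intro le_rearr_if_card_gt[OF assms(1), of G]) auto
qed

lemma finite_level_set_null_seq: "(x :: seq) \<longlonglongrightarrow> 0 \<Longrightarrow> 0 < s \<Longrightarrow> finite {i. s \<le> \<bar>x i\<bar>}"
proof -
  assume "x \<longlonglongrightarrow> 0" "0 < s"
  then obtain N where "\<And>n. n \<ge> N \<Longrightarrow> \<bar>x n\<bar> < s" unfolding LIMSEQ_iff by auto
  then have "{i. s \<le> \<bar>x i\<bar>} \<subseteq> {..<N}" by (auto simp: not_less[symmetric])
  then show ?thesis by (rule finite_subset) simp
qed

text \<open>For a null sequence the infimum defining x*(k) is attained.\<close>

lemma card_level_set_gt_if_le_rearr:
  assumes x: "x \<longlonglongrightarrow> 0" and s: "0 < s" "s \<le> rearr x k"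
  shows "k < card {i. s \<le> \<bar>x i\<bar>}"
proof (rule ccontr)
  define F where "F = {i. s \<le> \<bar>x i\<bar>}"
  assume "\<not> k < card {i. s \<le> \<bar>x i\<bar>}"
  then have card_F: "card F \<le> k" unfolding F_def by simp
  have fin_F: "finite F" unfolding F_def by (rule finite_level_set_null_seq[OF x s(1)])
  define V where "V = insert (s/2) ((\<lambda>i. \<bar>x i\<bar>) ` ({i. s/2 \<le> \<bar>x i\<bar>} - F))"
  have fin_V: "finite V"
    unfolding V_def using finite_level_set_null_seq[OF x, of "s/2"] s(1) by simp
  have "Max V \<in> V" by (rule Max_in[OF fin_V]) (simp add: V_def)
  then have "Max V < s" using s(1) unfolding V_def F_def by auto
  moreover have "(SUP m\<in>- F. \<bar>x m\<bar>) \<le> Max V"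
  proof (rule cSUP_least)
    show "- F \<noteq> {}" using fin_F ex_new_if_finite[OF infinite_UNIV_nat] by auto
    fix m assume "m \<in> - F"
    show "\<bar>x m\<bar> \<le> Max V"
    proof (cases "s/2 \<le> \<bar>x m\<bar>")
      case True
      with \<open>m \<in> - F\<close> have "\<bar>x m\<bar> \<in> V" unfolding V_def by blast
      then show ?thesis by (rule Max_ge[OF fin_V])
    next
      case False
      moreover have "s/2 \<le> Max V" by (rule Max_ge[OF fin_V]) (simp add: V_def)
      ultimately show ?thesis by linarith
    qed
  qed
  ultimately show False
    using rearr_le_Sup_compl[OF null_seq_in_linf[OF x] fin_F card_F] s(2) by linarith
qed

text \<open>The hypothesis i < card {m\<in>S. r i \<le> g m} says that r i is at most the (i+1)-st largest
  value of g on S.\<close>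

lemma sum_lessThan_le_by_counting:
  fixes r g :: "nat \<Rightarrow> real"
  assumes S: "finite S" and count: "\<forall>i<j. i < card {m\<in>S. r i \<le> g m}" and g: "\<forall>m\<in>S. 0 \<le> g m"
  shows "(\<Sum>i<j. r i) \<le> (\<Sum>m\<in>S. g m)"
  using count g
proof (induction j arbitrary: r g)
  case 0
  then show ?case by (simp add: sum_nonneg)
next
  case (Suc j)
  have "0 < card {m\<in>S. r 0 \<le> g m}" using Suc.prems(1) by simp
  then have "{m\<in>S. r 0 \<le> g m} \<noteq> {}" by (metis card.empty less_irrefl)
  then obtain a where a: "a \<in> S" "r 0 \<le> g a" by blast
  define g' where "g' = g(a := 0)"
  have "\<forall>i<j. i < card {m\<in>S. r (Suc i) \<le> g' m}"
  proof (intro allI impI)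
    fix i assume "i < j"
    then have "Suc i < card {m\<in>S. r (Suc i) \<le> g m}" using Suc.prems(1) by auto
    moreover have "{m\<in>S. r (Suc i) \<le> g m} - {a} \<subseteq> {m\<in>S. r (Suc i) \<le> g' m}"
      unfolding g'_def by auto
    then have "card ({m\<in>S. r (Suc i) \<le> g m} - {a}) \<le> card {m\<in>S. r (Suc i) \<le> g' m}"
      by (rule card_mono[rotated]) (use S in auto)
    moreover have "card {m\<in>S. r (Suc i) \<le> g m} \<le> Suc (card ({m\<in>S. r (Suc i) \<le> g m} - {a}))"
      using S by (simp add: card_Diff_singleton_if) linarith
    ultimately show "i < card {m\<in>S. r (Suc i) \<le> g' m}" by linarith
  qed
  moreover have "\<forall>m\<in>S. 0 \<le> g' m" using Suc.prems(2) unfolding g'_def by auto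
  ultimately have IH: "(\<Sum>i<j. r (Suc i)) \<le> (\<Sum>m\<in>S. g' m)" by (rule Suc.IH)
  have "(\<Sum>i<Suc j. r i) = r 0 + (\<Sum>i<j. r (Suc i))" by (rule sum.lessThan_Suc_shift)
  also have "\<dots> \<le> g a + (\<Sum>m\<in>S - {a}. g' m)"
    using IH a(2) sum.remove[OF S a(1), of g'] by (simp add: g'_def)
  also have "(\<Sum>m\<in>S - {a}. g' m) = (\<Sum>m\<in>S - {a}. g m)" unfolding g'_def by (rule sum.cong) auto
  also have "g a + \<dots> = (\<Sum>m\<in>S. g m)" by (rule sum.remove[OF S a(1), symmetric])
  finally show ?case .
qed

lemma sum_le_sum_lessThan_by_counting:
  fixes r h :: "nat \<Rightarrow> real"
  assumes "finite P" "\<And>i s. i < card {m\<in>P. s \<le> h m} \<Longrightarrow> s \<le> r i"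
  shows "(\<Sum>m\<in>P. h m) \<le> (\<Sum>i<card P. r i)"
  using assms
proof (induction "card P" arbitrary: P r)
  case 0
  then show ?case by simp
next
  case (Suc n)
  then have "Max (h ` P) \<in> h ` P" by (intro Max_in) auto
  then obtain a where a: "a \<in> P" "h a = Max (h ` P)" by auto
  then have a_max: "h m \<le> h a" if "m \<in> P" for m using Suc.prems(1) that by simp
  define P' where "P' = P - {a}"
  have card_P': "n = card P'" unfolding P'_def using Suc.hyps(2) a(1) Suc.prems(1) by simp
  have fin_P': "finite P'" unfolding P'_def using Suc.prems(1) by simp
  have "s \<le> r (Suc i)" if i: "i < card {m\<in>P'. s \<le> h m}" for i s
  proof -
    from i obtain m where "m \<in> P'" "s \<le> h m" by (metis (mono_tags, lifting) card.empty empty_Collect_eq not_less0)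
    then have "s \<le> h a" using a_max unfolding P'_def by force
    then have "{m\<in>P. s \<le> h m} = insert a {m\<in>P'. s \<le> h m}" unfolding P'_def using a(1) by auto
    then have "card {m\<in>P. s \<le> h m} = Suc (card {m\<in>P'. s \<le> h m})"
      using fin_P' by (simp add: P'_def)
    then show ?thesis using i Suc.prems(2) by simp
  qed
  then have IH: "(\<Sum>m\<in>P'. h m) \<le> (\<Sum>i<card P'. r (Suc i))"
    by (intro Suc.hyps(1)[OF card_P' fin_P'])
  have "h a \<le> r 0"
  proof (rule Suc.prems(2))
    have "a \<in> {m\<in>P. h a \<le> h m}" using a(1) by simp
    then show "0 < card {m\<in>P. h a \<le> h m}" using Suc.prems(1) card_gt_0_iff by fastforce
  qed
  have "(\<Sum>m\<in>P. h m) = h a + (\<Sum>m\<in>P'. h m)" unfolding P'_def by (rule sum.remove[OF Suc.prems(1) a(1)])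
  also have "\<dots> \<le> r 0 + (\<Sum>i<n. r (Suc i))" using IH \<open>h a \<le> r 0\<close> card_P' by simp
  also have "\<dots> = (\<Sum>i<Suc n. r i)" by (rule sum.lessThan_Suc_shift[symmetric])
  finally show ?case using Suc.hyps(2) by simp
qed

text \<open>This lemma and the next one say that the partial sums of the rearrangement are the
  K-functional between l1 and l_infinity:
  x*(0) + ... + x*(k) = inf {(k+1) t + \<parallel>u\<parallel>_1 : \<parallel>x - u\<parallel>_\<infinity> \<le> t}.\<close>

lemma sum_rearr_le_of_approx:
  fixes z u :: seq
  assumes z: "z \<longlonglongrightarrow> 0" and u: "u \<in> l1" and zu: "\<And>m. \<bar>z m - u m\<bar> \<le> t" and t: "0 < t"
  shows "(\<Sum>i\<le>k. rearr z i) \<le> real (Suc k) * t + l1_norm u"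
proof -
  define S where "S = {m. t \<le> \<bar>z m\<bar>} \<union> {..k}"
  have fin_S: "finite S" unfolding S_def using finite_level_set_null_seq[OF z t] by simp
  define g where "g m = max (\<bar>z m\<bar> - t) 0" for m
  define r where "r i = max (rearr z i - t) 0" for i
  have count: "i < card {m\<in>S. r i \<le> g m}" if i: "i < Suc k" for i
  proof (cases "t < rearr z i")
    case True
    have "{m. rearr z i \<le> \<bar>z m\<bar>} \<subseteq> {m\<in>S. r i \<le> g m}"
      unfolding S_def r_def g_def using True by auto
    then have "card {m. rearr z i \<le> \<bar>z m\<bar>} \<le> card {m\<in>S. r i \<le> g m}"
      by (rule card_mono[rotated]) (use fin_S in auto)
    moreover have "i < card {m. rearr z i \<le> \<bar>z m\<bar>}"
      by (rule card_level_set_gt_if_le_rearr[OF z]) (use True t in auto)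
    ultimately show ?thesis by linarith
  next
    case False
    then have "{m\<in>S. r i \<le> g m} = S" unfolding r_def g_def by auto
    moreover have "card {..k} \<le> card S" unfolding S_def by (rule card_mono) (use fin_S S_def in auto)
    ultimately show ?thesis using i by simp
  qed
  have "(\<Sum>i\<le>k. rearr z i) \<le> (\<Sum>i<Suc k. t + r i)"
    unfolding lessThan_Suc_atMost by (rule sum_mono) (auto simp: r_def)
  also have "\<dots> = real (Suc k) * t + (\<Sum>i<Suc k. r i)"
    by (simp add: sum.distrib)
  also have "(\<Sum>i<Suc k. r i) \<le> (\<Sum>m\<in>S. g m)"
    by (rule sum_lessThan_le_by_counting[OF fin_S]) (use count in \<open>auto simp: g_def\<close>)
  also have "\<dots> \<le> (\<Sum>m\<in>S. \<bar>u m\<bar>)"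
  proof (rule sum_mono)
    fix m show "g m \<le> \<bar>u m\<bar>" unfolding g_def using zu[of m] t by auto
  qed
  also have "\<dots> \<le> l1_norm u"
    by (rule sum_abs_le_l1_norm[OF u fin_S])
  finally show ?thesis by simp
qed

lemma finite_card_level_set_gt_rearr:
  assumes x: "x \<in> linf"
  shows "finite {m. rearr x k < \<bar>x m\<bar>}" "card {m. rearr x k < \<bar>x m\<bar>} \<le> k"
proof -
  let ?P = "{m. rearr x k < \<bar>x m\<bar>}"
  have no_large_subset: False if G: "G \<subseteq> ?P" "finite G" "card G = Suc k" for G
  proof -
    have "G \<noteq> {}" using G by auto
    then have "Min ((\<lambda>m. \<bar>x m\<bar>) ` G) \<in> (\<lambda>m. \<bar>x m\<bar>) ` G" using G by (intro Min_in) auto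
    then have "rearr x k < Min ((\<lambda>m. \<bar>x m\<bar>) ` G)" using G(1) by auto
    moreover have "Min ((\<lambda>m. \<bar>x m\<bar>) ` G) \<le> rearr x k"
      by (rule le_rearr_if_card_gt[OF x G(2)]) (use G in auto)
    ultimately show False by simp
  qed
  show fin: "finite ?P"
    using infinite_arbitrarily_large[of ?P "Suc k"] no_large_subset by blast
  show "card ?P \<le> k"
  proof (rule ccontr)
    assume "\<not> card ?P \<le> k"
    then obtain G where "G \<subseteq> ?P" "card G = Suc k"
      using obtain_subset_with_card_n[of "Suc k" ?P] by auto
    then show False using no_large_subset finite_subset[OF _ fin] by blast
  qed
qed

text \<open>The infimum is attained at t = x*(k), by cutting x off at level t.\<close>

lemma sum_rearr_attained:
  assumes x: "x \<in> linf"
  obtains u where "u \<in> l1" "\<And>m. \<bar>x m - u m\<bar> \<le> rearr x k"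
    "real (Suc k) * rearr x k + l1_norm u \<le> (\<Sum>i\<le>k. rearr x i)"
proof -
  define t where "t = rearr x k"
  define u where "u m = sgn (x m) * max (\<bar>x m\<bar> - t) 0" for m
  define P where "P = {m. t < \<bar>x m\<bar>}"
  have t0: "0 \<le> t" unfolding t_def by (rule rearr_nonneg[OF x])
  have fin_P: "finite P" and card_P: "card P \<le> k"
    using finite_card_level_set_gt_rearr[OF x] unfolding P_def t_def by auto
  have "{m. u m \<noteq> 0} = P" unfolding u_def P_def using t0 by (auto simp: sgn_if)
  then have u: "u \<in> l1" "l1_norm u = (\<Sum>m\<in>P. \<bar>u m\<bar>)"
    using finite_support_l1[of u] fin_P by auto
  have "(\<Sum>m\<in>P. \<bar>u m\<bar>) = (\<Sum>m\<in>P. \<bar>x m\<bar> - t)"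
    using t0 by (intro sum.cong) (auto simp: u_def P_def abs_mult sgn_if)
  also have "\<dots> \<le> (\<Sum>i<card P. rearr x i - t)"
  proof (rule sum_le_sum_lessThan_by_counting[OF fin_P])
    fix i s assume i: "i < card {m\<in>P. s \<le> \<bar>x m\<bar> - t}"
    have "card {m\<in>P. s \<le> \<bar>x m\<bar> - t} \<le> card P" by (rule card_mono[OF fin_P]) auto
    then have "i \<le> k" using i card_P by linarith
    show "s \<le> rearr x i - t"
    proof (cases "0 < s")
      case True
      have "s + t \<le> rearr x i"
        by (rule le_rearr_if_card_gt[OF x _ i]) (use fin_P in auto)
      then show ?thesis by simp
    next
      case False
      then show ?thesis using rearr_antimono[OF x \<open>i \<le> k\<close>] unfolding t_def by simp
    qed
  qed
  also have "\<dots> \<le> (\<Sum>i<Suc k. rearr x i - t)"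
    by (rule sum_mono2) (use card_P rearr_antimono[OF x] in \<open>auto simp: t_def\<close>)
  also have "\<dots> = (\<Sum>i\<le>k. rearr x i) - real (Suc k) * t"
    unfolding lessThan_Suc_atMost by (simp add: sum_subtractf)
  finally have "real (Suc k) * t + l1_norm u \<le> (\<Sum>i\<le>k. rearr x i)" using u by linarith
  moreover have "\<bar>x m - u m\<bar> \<le> t" for m
    using t0 by (cases "t < \<bar>x m\<bar>"; cases "0 < x m") (auto simp: u_def sgn_if)
  ultimately show thesis using that u(1) unfolding t_def by blast
qed

section \<open>Dunford--Schwartz operators\<close>

lemma dunford_schwartz_linf: "dunford_schwartz T \<Longrightarrow> x \<in> linf \<Longrightarrow> T x \<in> linf"
  and dunford_schwartz_add:
    "dunford_schwartz T \<Longrightarrow> x \<in> linf \<Longrightarrow> y \<in> linf \<Longrightarrow> T (\<lambda>i. x i + y i) = (\<lambda>i. T x i + T y i)"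
  and dunford_schwartz_scale: "dunford_schwartz T \<Longrightarrow> x \<in> linf \<Longrightarrow> T (\<lambda>i. c * x i) = (\<lambda>i. c * T x i)"
  and dunford_schwartz_l1: "dunford_schwartz T \<Longrightarrow> x \<in> l1 \<Longrightarrow> T x \<in> l1"
  and dunford_schwartz_l1_norm_le: "dunford_schwartz T \<Longrightarrow> x \<in> l1 \<Longrightarrow> l1_norm (T x) \<le> l1_norm x"
  and dunford_schwartz_sup_norm_le: "dunford_schwartz T \<Longrightarrow> x \<in> linf \<Longrightarrow> sup_norm (T x) \<le> sup_norm x"
  unfolding dunford_schwartz_def by blast+

lemma dunford_schwartzI:
  assumes "\<And>x. x \<in> linf \<Longrightarrow> T x \<in> linf"
    "\<And>x y. x \<in> linf \<Longrightarrow> y \<in> linf \<Longrightarrow> T (\<lambda>i. x i + y i) = (\<lambda>i. T x i + T y i)"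
    "\<And>x c. x \<in> linf \<Longrightarrow> T (\<lambda>i. c * x i) = (\<lambda>i. c * T x i)"
    "\<And>x. x \<in> l1 \<Longrightarrow> T x \<in> l1" "\<And>x. x \<in> l1 \<Longrightarrow> l1_norm (T x) \<le> l1_norm x"
    "\<And>x. x \<in> linf \<Longrightarrow> sup_norm (T x) \<le> sup_norm x"
  shows "dunford_schwartz T"
  unfolding dunford_schwartz_def using assms by blast

lemma dunford_schwartz_diff:
  "dunford_schwartz T \<Longrightarrow> x \<in> linf \<Longrightarrow> y \<in> linf \<Longrightarrow> T (\<lambda>i. x i - y i) = (\<lambda>i. T x i - T y i)"
  using dunford_schwartz_add[of T x "\<lambda>i. (-1) * y i"] dunford_schwartz_scale[of T y "-1"]
    linf_scale[of y "-1"] by simp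

lemma dunford_schwartz_sum:
  assumes T: "dunford_schwartz T"
  shows "finite J \<Longrightarrow> (\<And>j. j \<in> J \<Longrightarrow> f j \<in> linf) \<Longrightarrow>
    T (\<lambda>i. \<Sum>j\<in>J. f j i) = (\<lambda>i. \<Sum>j\<in>J. T (f j) i)"
proof (induction J rule: finite_induct)
  case empty
  then show ?case using dunford_schwartz_scale[OF T linfI[of "\<lambda>i. 0" 0], of 0] by simp
next
  case (insert a J)
  then show ?case
    using dunford_schwartz_add[OF T, of "f a" "\<lambda>i. \<Sum>j\<in>J. f j i"] linf_sum[of J f] by simp
qed

lemma dunford_schwartz_abs_diff_le:
  assumes "dunford_schwartz T" "x \<in> linf" "y \<in> linf" "\<And>i. \<bar>x i - y i\<bar> \<le> e"
  shows "\<bar>T x i - T y i\<bar> \<le> e"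
proof -
  have "\<bar>T x i - T y i\<bar> = \<bar>T (\<lambda>i. x i - y i) i\<bar>"
    using dunford_schwartz_diff[OF assms(1-3)] by simp
  also have "\<dots> \<le> sup_norm (\<lambda>i. x i - y i)"
    using abs_le_sup_norm dunford_schwartz_linf dunford_schwartz_sup_norm_le assms(1) linf_diff[OF assms(2,3)]
    by (meson order_trans)
  also have "\<dots> \<le> e" by (rule sup_norm_le[OF assms(4)])
  finally show ?thesis .
qed

lemma dunford_schwartz_null:
  assumes T: "dunford_schwartz T" and x: "x \<longlonglongrightarrow> 0"
  shows "T x \<longlonglongrightarrow> 0"
proof (rule null_seq_if_uniform_approx)
  fix e :: real assume "0 < e"
  then obtain y where y: "y \<in> l1" "\<And>i. \<bar>x i - y i\<bar> \<le> e" using null_seq_approx_l1[OF x] by blast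
  then have "\<bar>T x i - T y i\<bar> \<le> e" for i
    using dunford_schwartz_abs_diff_le[OF T null_seq_in_linf[OF x]] l1_subset_linf by blast
  then show "\<exists>z. z \<longlonglongrightarrow> 0 \<and> (\<forall>i. \<bar>T x i - z i\<bar> \<le> e)"
    using l1_imp_null[OF dunford_schwartz_l1[OF T y(1)]] by blast
qed

lemma dunford_schwartz_id: "dunford_schwartz (\<lambda>x. x)"
  unfolding dunford_schwartz_def by auto

lemma dunford_schwartz_comp:
  assumes S: "dunford_schwartz S" and T: "dunford_schwartz T"
  shows "dunford_schwartz (\<lambda>x. S (T x))"
proof (rule dunford_schwartzI)
  fix x assume x: "x \<in> linf"
  show "S (T x) \<in> linf" by (intro dunford_schwartz_linf[OF S] dunford_schwartz_linf[OF T x])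
  show "sup_norm (S (T x)) \<le> sup_norm x"
    using dunford_schwartz_sup_norm_le[OF S dunford_schwartz_linf[OF T x]]
      dunford_schwartz_sup_norm_le[OF T x] by linarith
  fix c show "S (T (\<lambda>i. c * x i)) = (\<lambda>i. c * S (T x) i)"
    using dunford_schwartz_scale[OF T x] dunford_schwartz_scale[OF S dunford_schwartz_linf[OF T x]]
    by simp
next
  fix x y assume "x \<in> linf" "y \<in> linf"
  then show "S (T (\<lambda>i. x i + y i)) = (\<lambda>i. S (T x) i + S (T y) i)"
    using dunford_schwartz_add[OF T] dunford_schwartz_add[OF S] dunford_schwartz_linf[OF T] by simp
next
  fix x assume x: "x \<in> l1"
  show "S (T x) \<in> l1" by (intro dunford_schwartz_l1[OF S] dunford_schwartz_l1[OF T x])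
  show "l1_norm (S (T x)) \<le> l1_norm x"
    using dunford_schwartz_l1_norm_le[OF S dunford_schwartz_l1[OF T x]]
      dunford_schwartz_l1_norm_le[OF T x] by linarith
qed

lemma dunford_schwartz_funpow: "dunford_schwartz T \<Longrightarrow> dunford_schwartz (T ^^ k)"
proof (induction k)
  case 0
  then show ?case using dunford_schwartz_id by (simp add: id_def)
next
  case (Suc k)
  then show ?case using dunford_schwartz_comp[of T "T ^^ k"] by (simp add: comp_def)
qed

lemma abs_sum_le_weighted_bound:
  fixes c :: "'a \<Rightarrow> real"
  assumes "finite J" "\<And>j. j \<in> J \<Longrightarrow> 0 \<le> c j" "\<And>j. j \<in> J \<Longrightarrow> \<bar>v j\<bar> \<le> B"
  shows "\<bar>\<Sum>j\<in>J. c j * v j\<bar> \<le> (\<Sum>j\<in>J. c j) * B"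
proof -
  have "\<bar>\<Sum>j\<in>J. c j * v j\<bar> \<le> (\<Sum>j\<in>J. \<bar>c j * v j\<bar>)" by (rule sum_abs)
  also have "\<dots> \<le> (\<Sum>j\<in>J. c j * B)"
    by (rule sum_mono) (simp add: abs_mult assms mult_left_mono)
  finally show ?thesis by (simp add: sum_distrib_right)
qed

lemma dunford_schwartz_convex_comb:
  assumes J: "finite J" and S: "\<And>j. j \<in> J \<Longrightarrow> dunford_schwartz (S j)"
    and l: "\<And>j. j \<in> J \<Longrightarrow> 0 \<le> l j" and sum_l: "(\<Sum>j\<in>J. l j) \<le> 1"
  shows "dunford_schwartz (\<lambda>x i. \<Sum>j\<in>J. l j * S j x i)"
proof (rule dunford_schwartzI)
  fix x assume x: "x \<in> linf"
  show "(\<lambda>i. \<Sum>j\<in>J. l j * S j x i) \<in> linf"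
    by (rule linf_sum[OF J]) (intro linf_scale dunford_schwartz_linf[OF S x])
  show "sup_norm (\<lambda>i. \<Sum>j\<in>J. l j * S j x i) \<le> sup_norm x"
  proof (rule sup_norm_le)
    fix i
    have "\<bar>\<Sum>j\<in>J. l j * S j x i\<bar> \<le> (\<Sum>j\<in>J. l j) * sup_norm x"
    proof (rule abs_sum_le_weighted_bound[OF J l])
      fix j assume "j \<in> J"
      then show "\<bar>S j x i\<bar> \<le> sup_norm x"
        using abs_le_sup_norm[OF dunford_schwartz_linf[OF S x]] dunford_schwartz_sup_norm_le[OF S x]
        by (meson order_trans)
    qed
    also have "\<dots> \<le> sup_norm x"
      using sum_l sup_norm_nonneg[OF x] by (simp add: mult_left_le_one_le sum_nonneg l)
    finally show "\<bar>\<Sum>j\<in>J. l j * S j x i\<bar> \<le> sup_norm x" .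
  qed
  fix c show "(\<lambda>i. \<Sum>j\<in>J. l j * S j (\<lambda>i. c * x i) i) = (\<lambda>i. c * (\<Sum>j\<in>J. l j * S j x i))"
    using dunford_schwartz_scale[OF S x] by (simp add: sum_distrib_left mult.left_commute)
  fix y assume y: "y \<in> linf"
  show "(\<lambda>i. \<Sum>j\<in>J. l j * S j (\<lambda>i. x i + y i) i) =
        (\<lambda>i. (\<Sum>j\<in>J. l j * S j x i) + (\<Sum>j\<in>J. l j * S j y i))"
    using dunford_schwartz_add[OF S x y] by (simp add: sum.distrib[symmetric] distrib_left)
next
  fix x assume x: "x \<in> l1"
  have Sx: "(\<lambda>i. l j * S j x i) \<in> l1" if "j \<in> J" for j
    by (intro l1_scale dunford_schwartz_l1[OF S[OF that] x])
  then show "(\<lambda>i. \<Sum>j\<in>J. l j * S j x i) \<in> l1" by (rule l1_sum[OF J])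
  have "l1_norm (\<lambda>i. \<Sum>j\<in>J. l j * S j x i) \<le> (\<Sum>j\<in>J. l1_norm (\<lambda>i. l j * S j x i))"
    using Sx by (rule l1_norm_sum_le[OF J])
  also have "\<dots> \<le> (\<Sum>j\<in>J. l j * l1_norm x)"
    using dunford_schwartz_l1[OF S x] dunford_schwartz_l1_norm_le[OF S x]
    by (intro sum_mono) (simp add: l1_norm_scale l mult_left_mono)
  also have "\<dots> \<le> l1_norm x"
    using sum_l l1_norm_nonneg[OF x] by (simp add: sum_distrib_right[symmetric] mult_left_le_one_le sum_nonneg l)
  finally show "l1_norm (\<lambda>i. \<Sum>j\<in>J. l j * S j x i) \<le> l1_norm x" .
qed

text \<open>Split x = u + (x - u) as in sum_rearr_attained; S contracts both the l1 norm of u and the sup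
  norm of x - u, so sum_rearr_le_of_approx applies to S u as an approximation of xh.\<close>

lemma majorized_if_uniform_approx_by_dunford_schwartz:
  assumes x: "x \<in> linf" and xh: "xh \<longlonglongrightarrow> 0"
    and approx: "\<And>e. 0 < e \<Longrightarrow> \<exists>S. dunford_schwartz S \<and> (\<forall>i. \<bar>S x i - xh i\<bar> \<le> e)"
  shows "majorized xh x"
  unfolding majorized_def
proof
  fix k :: nat
  obtain u where u: "u \<in> l1" "\<And>m. \<bar>x m - u m\<bar> \<le> rearr x k"
    "real (Suc k) * rearr x k + l1_norm u \<le> (\<Sum>i\<le>k. rearr x i)"
    using sum_rearr_attained[OF x] by blast
  show "(\<Sum>i\<le>k. rearr xh i) \<le> (\<Sum>i\<le>k. rearr x i)"
  proof (rule field_le_epsilon)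
    fix e :: real assume e: "0 < e"
    define \<epsilon> where "\<epsilon> = e / real (Suc k)"
    have \<epsilon>: "0 < \<epsilon>" unfolding \<epsilon>_def using e by simp
    obtain S where S: "dunford_schwartz S" "\<And>i. \<bar>S x i - xh i\<bar> \<le> \<epsilon>" using approx[OF \<epsilon>] by blast
    have "\<bar>xh i - S u i\<bar> \<le> rearr x k + \<epsilon>" for i
      using dunford_schwartz_abs_diff_le[OF S(1) x, of u "rearr x k" i] u(1,2) l1_subset_linf S(2)[of i]
      by fastforce
    then have "(\<Sum>i\<le>k. rearr xh i) \<le> real (Suc k) * (rearr x k + \<epsilon>) + l1_norm (S u)"
      by (rule sum_rearr_le_of_approx[OF xh dunford_schwartz_l1[OF S(1) u(1)]])
        (use rearr_nonneg[OF x] \<epsilon> in \<open>simp add: add_nonneg_pos\<close>)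
    also have "\<dots> = real (Suc k) * rearr x k + e + l1_norm (S u)"
      unfolding \<epsilon>_def by (simp add: distrib_left)
    also have "\<dots> \<le> (\<Sum>i\<le>k. rearr x i) + e"
      using dunford_schwartz_l1_norm_le[OF S(1) u(1)] u(3) by linarith
    finally show "(\<Sum>i\<le>k. rearr xh i) \<le> (\<Sum>i\<le>k. rearr x i) + e" .
  qed
qed

definition cesaro :: "(seq \<Rightarrow> seq) \<Rightarrow> nat \<Rightarrow> seq \<Rightarrow> seq" where
  "cesaro T n x = (\<lambda>i. (\<Sum>k<n. (T ^^ k) x i) / real n)"

lemma dunford_schwartz_cesaro:
  assumes "dunford_schwartz T"
  shows "dunford_schwartz (cesaro T n)"
proof -
  have "dunford_schwartz (\<lambda>x i. \<Sum>k<n. (1 / real n) * (T ^^ k) x i)"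
    by (rule dunford_schwartz_convex_comb) (auto simp: dunford_schwartz_funpow[OF assms])
  moreover have "cesaro T n = (\<lambda>x i. \<Sum>k<n. (1 / real n) * (T ^^ k) x i)"
    unfolding cesaro_def by (simp add: sum_divide_distrib)
  ultimately show ?thesis by simp
qed

section \<open>The l2 norm\<close>

definition l2_norm :: "seq \<Rightarrow> real" where
  "l2_norm w = sqrt (\<Sum>n. (w n)\<^sup>2)"

lemma summable_power2_l1: "w \<in> l1 \<Longrightarrow> summable (\<lambda>n. (w n)\<^sup>2)"
proof -
  assume w: "w \<in> l1"
  have "summable (\<lambda>n. l1_norm w * \<bar>w n\<bar>)" using w unfolding l1_def by (intro summable_mult) auto
  then show ?thesis
  proof (rule summable_comparison_test')
    fix n
    have "(w n)\<^sup>2 = \<bar>w n\<bar> * \<bar>w n\<bar>" by (simp add: power2_eq_square abs_mult_self_eq)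
    also have "\<dots> \<le> l1_norm w * \<bar>w n\<bar>" by (rule mult_right_mono[OF abs_le_l1_norm[OF w]]) simp
    finally show "norm ((w n)\<^sup>2) \<le> l1_norm w * \<bar>w n\<bar>" by simp
  qed
qed

lemma sum_power2_le_suminf: "w \<in> l1 \<Longrightarrow> finite I \<Longrightarrow> (\<Sum>n\<in>I. (w n)\<^sup>2) \<le> (\<Sum>n. (w n)\<^sup>2)"
  by (intro sum_le_suminf summable_power2_l1) auto

lemma l2_norm_power2: "w \<in> l1 \<Longrightarrow> (l2_norm w)\<^sup>2 = (\<Sum>n. (w n)\<^sup>2)"
  unfolding l2_norm_def by (simp add: suminf_nonneg summable_power2_l1)

lemma l2_norm_nonneg: "w \<in> l1 \<Longrightarrow> 0 \<le> l2_norm w"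
  unfolding l2_norm_def by (simp add: suminf_nonneg summable_power2_l1)

lemma abs_le_l2_norm: "w \<in> l1 \<Longrightarrow> \<bar>w i\<bar> \<le> l2_norm w"
proof -
  assume "w \<in> l1"
  then have "(w i)\<^sup>2 \<le> (\<Sum>n. (w n)\<^sup>2)" using sum_power2_le_suminf[of w "{i}"] by simp
  then show ?thesis unfolding l2_norm_def using real_sqrt_le_mono by fastforce
qed

lemma L2_set_le_l2_norm: "w \<in> l1 \<Longrightarrow> finite I \<Longrightarrow> L2_set w I \<le> l2_norm w"
  unfolding L2_set_def l2_norm_def by (intro real_sqrt_le_mono sum_power2_le_suminf)

lemma l2_norm_le_if_partial_sums_le:
  assumes "w \<in> l1" "\<And>n. (\<Sum>i<n. (w i)\<^sup>2) \<le> B\<^sup>2" "0 \<le> B"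
  shows "l2_norm w \<le> B"
proof -
  have "(\<Sum>n. (w n)\<^sup>2) \<le> B\<^sup>2" by (rule suminf_le_const[OF summable_power2_l1[OF assms(1)] assms(2)])
  then have "sqrt (\<Sum>n. (w n)\<^sup>2) \<le> sqrt (B\<^sup>2)" by (rule real_sqrt_le_mono)
  then show ?thesis unfolding l2_norm_def using assms(3) by simp
qed

lemma l2_norm_add_le:
  assumes u: "u \<in> l1" and v: "v \<in> l1"
  shows "l2_norm (\<lambda>i. u i + v i) \<le> l2_norm u + l2_norm v"
proof (rule l2_norm_le_if_partial_sums_le[OF l1_add[OF u v]])
  fix n
  have "(\<Sum>i<n. (u i + v i)\<^sup>2) = (L2_set (\<lambda>i. u i + v i) {..<n})\<^sup>2"
    unfolding L2_set_def by (simp add: sum_nonneg)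
  also have "\<dots> \<le> (L2_set u {..<n} + L2_set v {..<n})\<^sup>2"
    by (rule power_mono[OF L2_set_triangle_ineq L2_set_nonneg])
  also have "\<dots> \<le> (l2_norm u + l2_norm v)\<^sup>2"
    by (intro power_mono add_mono L2_set_le_l2_norm[OF u] L2_set_le_l2_norm[OF v] add_nonneg_nonneg
        L2_set_nonneg) simp_all
  finally show "(\<Sum>i<n. (u i + v i)\<^sup>2) \<le> (l2_norm u + l2_norm v)\<^sup>2" .
qed (simp add: l2_norm_nonneg u v)

lemma l2_norm_scale: "w \<in> l1 \<Longrightarrow> l2_norm (\<lambda>i. c * w i) = \<bar>c\<bar> * l2_norm w"
  unfolding l2_norm_def
  using suminf_mult[OF summable_power2_l1, of w "c\<^sup>2"] by (simp add: power_mult_distrib real_sqrt_mult)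

lemma l2_norm_diff_le: "u \<in> l1 \<Longrightarrow> v \<in> l1 \<Longrightarrow> l2_norm (\<lambda>i. u i - v i) \<le> l2_norm u + l2_norm v"
  using l2_norm_add_le[of u "\<lambda>i. (-1) * v i"] l2_norm_scale[of v "-1"] l1_scale[of v "-1"] by simp

lemma l2_norm_sum_le:
  "finite J \<Longrightarrow> (\<And>j. j \<in> J \<Longrightarrow> f j \<in> l1) \<Longrightarrow> l2_norm (\<lambda>i. \<Sum>j\<in>J. f j i) \<le> (\<Sum>j\<in>J. l2_norm (f j))"
proof (induction J rule: finite_induct)
  case empty
  then show ?case by (simp add: l2_norm_def)
next
  case (insert a J)
  then show ?case
    using l2_norm_add_le[of "f a" "\<lambda>i. \<Sum>j\<in>J. f j i"] l1_sum[of J f] by simp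
qed

lemma l2_norm_parallelogram:
  assumes u: "u \<in> l1" and v: "v \<in> l1"
  shows "(l2_norm (\<lambda>i. u i - v i))\<^sup>2
    = 2 * (l2_norm u)\<^sup>2 + 2 * (l2_norm v)\<^sup>2 - 4 * (l2_norm (\<lambda>i. (u i + v i) / 2))\<^sup>2"
proof -
  have mid: "(\<lambda>i. (u i + v i) / 2) \<in> l1" using l1_scale[OF l1_add[OF u v], of "1/2"] by simp
  note summable = summable_power2_l1[OF u] summable_power2_l1[OF v] summable_power2_l1[OF mid]
  have "(\<lambda>i. (u i - v i)\<^sup>2) = (\<lambda>i. 2 * (u i)\<^sup>2 + 2 * (v i)\<^sup>2 - 4 * ((u i + v i) / 2)\<^sup>2)"
    by (auto simp: fun_eq_iff power2_eq_square algebra_simps)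
  then have "(\<Sum>i. (u i - v i)\<^sup>2)
      = (\<Sum>i. 2 * (u i)\<^sup>2 + 2 * (v i)\<^sup>2) - (\<Sum>i. 4 * ((u i + v i) / 2)\<^sup>2)"
    using summable by (simp add: suminf_diff summable_add)
  also have "\<dots> = 2 * (\<Sum>i. (u i)\<^sup>2) + 2 * (\<Sum>i. (v i)\<^sup>2) - 4 * (\<Sum>i. ((u i + v i) / 2)\<^sup>2)"
    using summable by (simp add: suminf_add[symmetric] suminf_mult summable_mult del: power_divide)
  finally show ?thesis by (simp add: l2_norm_power2 u v mid l1_diff del: power_divide)
qed

lemma weighted_Cauchy_Schwarz:
  fixes c w :: "nat \<Rightarrow> real"
  shows "(\<Sum>j\<in>J. c j * w j)\<^sup>2 \<le> (\<Sum>j\<in>J. \<bar>c j\<bar>) * (\<Sum>j\<in>J. \<bar>c j\<bar> * (w j)\<^sup>2)"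
proof -
  have "\<bar>\<Sum>j\<in>J. c j * w j\<bar> \<le> (\<Sum>j\<in>J. \<bar>c j * w j\<bar>)" by (rule sum_abs)
  also have "\<dots> = (\<Sum>j\<in>J. sqrt \<bar>c j\<bar> * (sqrt \<bar>c j\<bar> * \<bar>w j\<bar>))"
    by (rule sum.cong) (auto simp: abs_mult real_sqrt_mult[symmetric])
  finally have "(\<Sum>j\<in>J. c j * w j)\<^sup>2 \<le> (\<Sum>j\<in>J. sqrt \<bar>c j\<bar> * (sqrt \<bar>c j\<bar> * \<bar>w j\<bar>))\<^sup>2"
    by (metis abs_ge_zero order.trans power2_abs power_mono)
  also have "\<dots> \<le> (\<Sum>j\<in>J. (sqrt \<bar>c j\<bar>)\<^sup>2) * (\<Sum>j\<in>J. (sqrt \<bar>c j\<bar> * \<bar>w j\<bar>)\<^sup>2)"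
    by (rule Cauchy_Schwarz_ineq_sum)
  also have "\<dots> = (\<Sum>j\<in>J. \<bar>c j\<bar>) * (\<Sum>j\<in>J. \<bar>c j\<bar> * (w j)\<^sup>2)"
    by (simp add: power_mult_distrib)
  finally show ?thesis .
qed

definition unit_seq :: "nat \<Rightarrow> seq" where
  "unit_seq j = (\<lambda>i. if i = j then 1 else 0)"

lemma unit_seq_l1: "unit_seq j \<in> l1" and l1_norm_unit_seq: "l1_norm (unit_seq j) = 1"
proof -
  have "{i. unit_seq j i \<noteq> 0} = {j}" unfolding unit_seq_def by auto
  then show "unit_seq j \<in> l1" "l1_norm (unit_seq j) = 1"
    using finite_support_l1[of "unit_seq j"] by (simp_all add: unit_seq_def)
qed

lemma l1_tail:
  assumes w: "w \<in> l1"
  shows "(\<lambda>m. if m < N then 0 else w m) \<in> l1"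
    "l1_norm (\<lambda>m. if m < N then 0 else w m) = l1_norm w - (\<Sum>i<N. \<bar>w i\<bar>)"
proof -
  let ?t = "\<lambda>m. if m < N then 0 else w m"
  have sw: "summable (\<lambda>n. \<bar>w n\<bar>)" using w unfolding l1_def by simp
  have st: "summable (\<lambda>n. \<bar>?t n\<bar>)" by (rule summable_comparison_test'[OF sw]) auto
  then show "?t \<in> l1" unfolding l1_def by simp
  have "(\<Sum>n. \<bar>?t n\<bar>) = (\<Sum>n. \<bar>?t (n + N)\<bar>) + (\<Sum>i<N. \<bar>?t i\<bar>)"
    by (rule suminf_split_initial_segment[OF st])
  also have "\<dots> = l1_norm w - (\<Sum>i<N. \<bar>w i\<bar>)"
    using suminf_split_initial_segment[OF sw, of N] unfolding l1_norm_def by simp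
  finally show "l1_norm ?t = l1_norm w - (\<Sum>i<N. \<bar>w i\<bar>)" unfolding l1_norm_def .
qed

text \<open>On finitely supported sequences T acts as the matrix with entries T (unit_seq j) i. Its
  absolute row sums are at most 1 because T contracts the sup norm, its absolute column sums because
  T contracts the l1 norm; by Schur's test T then contracts the l2 norm.\<close>

context
  fixes T :: "seq \<Rightarrow> seq"
  assumes T: "dunford_schwartz T"
begin

lemma dunford_schwartz_truncation:
  "T (\<lambda>i. if i < N then w i else 0) i = (\<Sum>j<N. w j * T (unit_seq j) i)"
proof -
  have "(\<lambda>i. if i < N then w i else 0) = (\<lambda>i. \<Sum>j<N. w j * unit_seq j i)"
    by (auto simp: unit_seq_def fun_eq_iff if_distrib sum.delta cong: if_cong)
  moreover have "unit_seq j \<in> linf" for j using unit_seq_l1 l1_subset_linf by blast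
  ultimately show ?thesis
    using dunford_schwartz_sum[OF T, of "{..<N}" "\<lambda>j i. w j * unit_seq j i"]
      dunford_schwartz_scale[OF T] linf_scale by simp
qed

lemma dunford_schwartz_row_sum_le: "(\<Sum>j<N. \<bar>T (unit_seq j) i\<bar>) \<le> 1"
proof -
  define s where "s m = (if m < N then sgn (T (unit_seq m) i) else 0)" for m
  have s: "\<bar>s m\<bar> \<le> 1" for m unfolding s_def by (auto simp: sgn_if)
  then have "s \<in> linf" by (rule linfI)
  have "T s i = (\<Sum>j<N. sgn (T (unit_seq j) i) * T (unit_seq j) i)"
    unfolding s_def by (rule dunford_schwartz_truncation)
  then have "(\<Sum>j<N. \<bar>T (unit_seq j) i\<bar>) = T s i"
    by (simp add: sgn_mult_self_eq abs_sgn mult.commute)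
  also have "\<dots> \<le> sup_norm s"
    using abs_le_sup_norm[OF dunford_schwartz_linf[OF T \<open>s \<in> linf\<close>], of i]
      dunford_schwartz_sup_norm_le[OF T \<open>s \<in> linf\<close>] by linarith
  also have "\<dots> \<le> 1" by (rule sup_norm_le[OF s])
  finally show ?thesis .
qed

lemma dunford_schwartz_column_sum_le:
  assumes "finite I"
  shows "(\<Sum>i\<in>I. \<bar>T (unit_seq j) i\<bar>) \<le> 1"
  using sum_abs_le_l1_norm[OF dunford_schwartz_l1[OF T unit_seq_l1] assms, of j]
    dunford_schwartz_l1_norm_le[OF T unit_seq_l1, of j] l1_norm_unit_seq[of j] by linarith

lemma dunford_schwartz_truncation_tendsto:
  assumes w: "w \<in> l1"
  shows "(\<lambda>N. T (\<lambda>i. if i < N then w i else 0) i) \<longlonglongrightarrow> T w i"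
proof -
  have wl: "w \<in> linf" using w l1_subset_linf by blast
  have trl: "(\<lambda>i. if i < N then w i else 0) \<in> linf" for N
    by (rule linfI[of _ "sup_norm w"]) (simp add: abs_le_sup_norm[OF wl] sup_norm_nonneg[OF wl])
  have bound: "\<bar>T w i - T (\<lambda>i. if i < N then w i else 0) i\<bar> \<le> l1_norm w - (\<Sum>i<N. \<bar>w i\<bar>)" for N
  proof -
    have "(\<lambda>m. w m - (if m < N then w m else 0)) = (\<lambda>m. if m < N then 0 else w m)" by auto
    then have "T w i - T (\<lambda>i. if i < N then w i else 0) i = T (\<lambda>m. if m < N then 0 else w m) i"
      using fun_cong[OF dunford_schwartz_diff[OF T wl trl[of N]], of i] by simp
    also have "\<bar>\<dots>\<bar> \<le> l1_norm (T (\<lambda>m. if m < N then 0 else w m))"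
      by (rule abs_le_l1_norm[OF dunford_schwartz_l1[OF T l1_tail(1)[OF w]]])
    also have "\<dots> \<le> l1_norm w - (\<Sum>i<N. \<bar>w i\<bar>)"
      using dunford_schwartz_l1_norm_le[OF T l1_tail(1)[OF w]] l1_tail(2)[OF w] by simp
    finally show ?thesis .
  qed
  have "(\<lambda>N. \<Sum>i<N. \<bar>w i\<bar>) \<longlonglongrightarrow> l1_norm w"
    using w unfolding l1_def l1_norm_def by (intro summable_LIMSEQ) simp
  then have "(\<lambda>N. l1_norm w - (\<Sum>i<N. \<bar>w i\<bar>)) \<longlonglongrightarrow> 0"
    using tendsto_diff[OF tendsto_const[of "l1_norm w"]] by fastforce
  then have "(\<lambda>N. T w i - T (\<lambda>i. if i < N then w i else 0) i) \<longlonglongrightarrow> 0"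
    by (rule Lim_null_comparison[rotated]) (simp add: bound)
  then have "(\<lambda>N. T w i - (T w i - T (\<lambda>i. if i < N then w i else 0) i)) \<longlonglongrightarrow> T w i - 0"
    by (intro tendsto_diff tendsto_const)
  then show ?thesis by simp
qed

lemma dunford_schwartz_l2_norm_le:
  assumes w: "w \<in> l1"
  shows "l2_norm (T w) \<le> l2_norm w"
proof (rule l2_norm_le_if_partial_sums_le[OF dunford_schwartz_l1[OF T w]])
  fix n
  let ?I = "{..<n::nat}"
  show "(\<Sum>i\<in>?I. (T w i)\<^sup>2) \<le> (l2_norm w)\<^sup>2"
  proof (rule LIMSEQ_le_const2)
    show "(\<lambda>N. \<Sum>i\<in>?I. (T (\<lambda>i. if i < N then w i else 0) i)\<^sup>2) \<longlonglongrightarrow> (\<Sum>i\<in>?I. (T w i)\<^sup>2)"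
      by (intro tendsto_sum tendsto_power dunford_schwartz_truncation_tendsto[OF w])
    have "(\<Sum>i\<in>?I. (T (\<lambda>i. if i < N then w i else 0) i)\<^sup>2) \<le> (l2_norm w)\<^sup>2" for N
    proof -
      have "(\<Sum>i\<in>?I. (T (\<lambda>i. if i < N then w i else 0) i)\<^sup>2)
          = (\<Sum>i\<in>?I. (\<Sum>j<N. T (unit_seq j) i * w j)\<^sup>2)"
        by (simp add: dunford_schwartz_truncation mult.commute)
      also have "\<dots> \<le> (\<Sum>i\<in>?I. (\<Sum>j<N. \<bar>T (unit_seq j) i\<bar> * (w j)\<^sup>2))"
      proof (rule sum_mono)
        fix i
        have "(\<Sum>j<N. T (unit_seq j) i * w j)\<^sup>2
            \<le> (\<Sum>j<N. \<bar>T (unit_seq j) i\<bar>) * (\<Sum>j<N. \<bar>T (unit_seq j) i\<bar> * (w j)\<^sup>2)"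
          by (rule weighted_Cauchy_Schwarz)
        also have "\<dots> \<le> 1 * (\<Sum>j<N. \<bar>T (unit_seq j) i\<bar> * (w j)\<^sup>2)"
          by (rule mult_right_mono[OF dunford_schwartz_row_sum_le]) (simp add: sum_nonneg)
        finally show "(\<Sum>j<N. T (unit_seq j) i * w j)\<^sup>2 \<le> (\<Sum>j<N. \<bar>T (unit_seq j) i\<bar> * (w j)\<^sup>2)"
          by simp
      qed
      also have "\<dots> = (\<Sum>j<N. (w j)\<^sup>2 * (\<Sum>i\<in>?I. \<bar>T (unit_seq j) i\<bar>))"
        by (subst sum.swap) (simp add: sum_distrib_left mult.commute)
      also have "\<dots> \<le> (\<Sum>j<N. (w j)\<^sup>2)"
        using mult_left_mono[OF dunford_schwartz_column_sum_le[of ?I]] by (intro sum_mono) fastforce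
      also have "\<dots> \<le> (l2_norm w)\<^sup>2"
        using sum_power2_le_suminf[OF w] l2_norm_power2[OF w] by simp
      finally show ?thesis .
    qed
    then show "\<exists>N0. \<forall>N\<ge>N0. (\<Sum>i\<in>?I. (T (\<lambda>i. if i < N then w i else 0) i)\<^sup>2) \<le> (l2_norm w)\<^sup>2"
      by blast
  qed
qed (rule l2_norm_nonneg[OF w])

end

section \<open>Cesaro averages of l1 sequences converge in l2\<close>

text \<open>This is where the Hilbert space structure of l2 enters, through the parallelogram law.\<close>

lemma l2_norm_diff_near_Inf:
  assumes C: "C \<subseteq> l1" "\<And>u v. u \<in> C \<Longrightarrow> v \<in> C \<Longrightarrow> (\<lambda>i. (u i + v i) / 2) \<in> C"
    and u: "u \<in> C" "l2_norm u \<le> Inf (l2_norm ` C) + \<delta>"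
    and v: "v \<in> C" "l2_norm v \<le> Inf (l2_norm ` C) + \<delta>"
  shows "(l2_norm (\<lambda>i. u i - v i))\<^sup>2 \<le> 4 * \<delta> * (2 * Inf (l2_norm ` C) + \<delta>)"
proof -
  define d where "d = Inf (l2_norm ` C)"
  have bdd: "bdd_below (l2_norm ` C)"
    using C(1) l2_norm_nonneg by (auto intro!: bdd_belowI[of _ 0])
  have d0: "0 \<le> d"
    unfolding d_def using u(1) C(1) l2_norm_nonneg by (intro cInf_greatest) auto
  have "d \<le> l2_norm (\<lambda>i. (u i + v i) / 2)"
    unfolding d_def by (rule cInf_lower[OF imageI[OF C(2)[OF u(1) v(1)]] bdd])
  then have "d\<^sup>2 \<le> (l2_norm (\<lambda>i. (u i + v i) / 2))\<^sup>2" using d0 by (rule power_mono)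
  moreover have "(l2_norm u)\<^sup>2 \<le> (d + \<delta>)\<^sup>2" "(l2_norm v)\<^sup>2 \<le> (d + \<delta>)\<^sup>2"
    using u v C(1) l2_norm_nonneg unfolding d_def by (auto intro!: power_mono)
  ultimately have "(l2_norm (\<lambda>i. u i - v i))\<^sup>2 \<le> 2 * (d + \<delta>)\<^sup>2 + 2 * (d + \<delta>)\<^sup>2 - 4 * d\<^sup>2"
    using l2_norm_parallelogram[of u v] u(1) v(1) C(1) by (simp add: subset_iff)
  also have "\<dots> = 4 * \<delta> * (2 * d + \<delta>)" by (simp add: power2_eq_square algebra_simps)
  finally show ?thesis unfolding d_def .
qed

definition orbit_hull :: "(seq \<Rightarrow> seq) \<Rightarrow> seq \<Rightarrow> seq set" where
  "orbit_hull T y = {w. \<exists>N c. (\<forall>k. 0 \<le> c k) \<and> (\<Sum>k<N. c k) = 1 \<and> w = (\<lambda>i. \<Sum>k<N. c k * (T ^^ k) y i)}"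

lemma cesaro_in_orbit_hull: "0 < n \<Longrightarrow> cesaro T n y \<in> orbit_hull T y"
  unfolding orbit_hull_def cesaro_def
  by (intro CollectI exI[of _ n] exI[of _ "\<lambda>k. 1 / real n"]) (simp add: sum_divide_distrib)

lemma sum_lessThan_extend_zero:
  fixes M N :: nat
  assumes "M \<le> N"
  shows "(\<Sum>k<N. if k < M then f k else 0) = (\<Sum>k<M. f k)"
proof -
  have "{k \<in> {..<N}. k < M} = {..<M}" using assms by auto
  then show ?thesis using sum.inter_filter[of "{..<N}" f "\<lambda>k. k < M"] by simp
qed

lemma orbit_hull_midpoint:
  assumes "u \<in> orbit_hull T y" "v \<in> orbit_hull T y"
  shows "(\<lambda>i. (u i + v i) / 2) \<in> orbit_hull T y"
proof -
  obtain M a where a: "\<forall>k. 0 \<le> a k" "(\<Sum>k<M. a k) = 1" "u = (\<lambda>i. \<Sum>k<M. a k * (T ^^ k) y i)"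
    using assms(1) unfolding orbit_hull_def by blast
  obtain N b where b: "\<forall>k. 0 \<le> b k" "(\<Sum>k<N. b k) = 1" "v = (\<lambda>i. \<Sum>k<N. b k * (T ^^ k) y i)"
    using assms(2) unfolding orbit_hull_def by blast
  define a' where "a' k = (if k < M then a k else 0)" for k
  define b' where "b' k = (if k < N then b k else 0)" for k
  have extend: "(\<Sum>k<M + N. a' k * f k) = (\<Sum>k<M. a k * f k)"
    "(\<Sum>k<M + N. b' k * f k) = (\<Sum>k<N. b k * f k)" for f :: "nat \<Rightarrow> real"
  proof -
    have "(\<Sum>k<M + N. a' k * f k) = (\<Sum>k<M + N. if k < M then a k * f k else 0)"
      "(\<Sum>k<M + N. b' k * f k) = (\<Sum>k<M + N. if k < N then b k * f k else 0)"
      by (auto simp: a'_def b'_def intro: sum.cong)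
    then show "(\<Sum>k<M + N. a' k * f k) = (\<Sum>k<M. a k * f k)"
      "(\<Sum>k<M + N. b' k * f k) = (\<Sum>k<N. b k * f k)"
      by (simp_all add: sum_lessThan_extend_zero)
  qed
  define c where "c k = (a' k + b' k) / 2" for k
  have "\<forall>k. 0 \<le> c k" using a(1) b(1) by (simp add: c_def a'_def b'_def)
  moreover have "(\<Sum>k<M + N. c k) = 1"
    using extend[of "\<lambda>_. 1"] a(2) b(2) by (simp add: c_def sum_divide_distrib[symmetric] sum.distrib)
  moreover have "(\<lambda>i. (u i + v i) / 2) = (\<lambda>i. \<Sum>k<M + N. c k * (T ^^ k) y i)"
    using extend[of "\<lambda>k. (T ^^ k) y _"] a(3) b(3)
    by (simp add: fun_eq_iff c_def sum_divide_distrib[symmetric] sum.distrib algebra_simps)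
  ultimately show ?thesis unfolding orbit_hull_def by blast
qed

lemma sum_lessThan_diff_shift:
  "(\<Sum>j<n. (a :: nat \<Rightarrow> real) j) - (\<Sum>j<n. a (j + k)) = (\<Sum>j<k. a j) - (\<Sum>j<k. a (j + n))"
proof -
  have split: "(\<Sum>j<n + k. a j) = (\<Sum>j<n. a j) + (\<Sum>j<k. a (j + n))" for n k
    by (induction k) (auto simp: add.commute)
  show ?thesis using split[of n k] split[of k n] by (simp add: add.commute)
qed

context
  fixes T :: "seq \<Rightarrow> seq" and y :: seq
  assumes T: "dunford_schwartz T" and y: "y \<in> l1"
begin

lemma funpow_l1: "(T ^^ k) y \<in> l1"
  by (rule dunford_schwartz_l1[OF dunford_schwartz_funpow[OF T] y])

lemma l2_norm_funpow_le: "l2_norm ((T ^^ k) y) \<le> l2_norm y"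
  by (rule dunford_schwartz_l2_norm_le[OF dunford_schwartz_funpow[OF T] y])

lemma orbit_hull_subset_l1: "orbit_hull T y \<subseteq> l1"
proof
  fix w assume "w \<in> orbit_hull T y"
  then obtain N c where "w = (\<lambda>i. \<Sum>k<N. c k * (T ^^ k) y i)" unfolding orbit_hull_def by blast
  then show "w \<in> l1" by (auto intro!: l1_sum l1_scale funpow_l1)
qed

lemma l2_norm_sum_funpow_le: "l2_norm (\<lambda>i. \<Sum>j<k. (T ^^ (j + m)) y i) \<le> real k * l2_norm y"
proof -
  have "l2_norm (\<lambda>i. \<Sum>j<k. (T ^^ (j + m)) y i) \<le> (\<Sum>j<k. l2_norm ((T ^^ (j + m)) y))"
    by (rule l2_norm_sum_le) (auto intro: funpow_l1)
  also have "\<dots> \<le> (\<Sum>j<k. l2_norm y)" by (rule sum_mono) (rule l2_norm_funpow_le)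
  finally show ?thesis by simp
qed

lemma l2_norm_cesaro_diff_funpow_le:
  assumes n: "0 < n"
  shows "l2_norm (\<lambda>i. cesaro T n y i - cesaro T n ((T ^^ k) y) i) \<le> 2 * real k * l2_norm y / real n"
proof -
  define A where "A i = (\<Sum>j<k. (T ^^ (j + 0)) y i)" for i
  define B where "B i = (\<Sum>j<k. (T ^^ (j + n)) y i)" for i
  have AB: "A \<in> l1" "B \<in> l1" unfolding A_def B_def by (auto intro!: l1_sum funpow_l1)
  have "cesaro T n y i - cesaro T n ((T ^^ k) y) i = (1 / real n) * (A i - B i)" for i
    using sum_lessThan_diff_shift[of "\<lambda>j. (T ^^ j) y i" n k]
    by (simp add: cesaro_def A_def B_def funpow_add diff_divide_distrib[symmetric])
  then have "l2_norm (\<lambda>i. cesaro T n y i - cesaro T n ((T ^^ k) y) i)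
      = (1 / real n) * l2_norm (\<lambda>i. A i - B i)"
    using l2_norm_scale[OF l1_diff[OF AB], of "1 / real n"] by simp
  also have "\<dots> \<le> (1 / real n) * (real k * l2_norm y + real k * l2_norm y)"
  proof (rule mult_left_mono)
    have "l2_norm A \<le> real k * l2_norm y" "l2_norm B \<le> real k * l2_norm y"
      unfolding A_def B_def by (rule l2_norm_sum_funpow_le)+
    then show "l2_norm (\<lambda>i. A i - B i) \<le> real k * l2_norm y + real k * l2_norm y"
      using l2_norm_diff_le[OF AB] by linarith
  qed simp
  finally show ?thesis by (simp add: field_simps)
qed

lemma l2_norm_cesaro_le:
  assumes n: "0 < n" and c: "\<forall>k. 0 \<le> c k" "(\<Sum>k<N. c k) = 1"
  shows "l2_norm (cesaro T n y) \<le> l2_norm (\<lambda>i. \<Sum>k<N. c k * (T ^^ k) y i) + 2 * real N * l2_norm y / real n"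
proof -
  define w where "w i = (\<Sum>k<N. c k * (T ^^ k) y i)" for i
  define D where "D k i = cesaro T n y i - cesaro T n ((T ^^ k) y) i" for k i
  have w: "w \<in> l1" unfolding w_def by (auto intro!: l1_sum l1_scale funpow_l1)
  have D: "D k \<in> l1" for k
    unfolding D_def using dunford_schwartz_l1[OF dunford_schwartz_cesaro[OF T]] funpow_l1 y
    by (intro l1_diff) auto
  have lin: "cesaro T n w = (\<lambda>i. \<Sum>k<N. c k * cesaro T n ((T ^^ k) y) i)"
    unfolding w_def
    using dunford_schwartz_sum[OF dunford_schwartz_cesaro[OF T], of "{..<N}" "\<lambda>k i. c k * (T ^^ k) y i"]
      dunford_schwartz_scale[OF dunford_schwartz_cesaro[OF T]] linf_scale funpow_l1 l1_subset_linf
    by (simp add: subset_iff)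
  have "cesaro T n y i - cesaro T n w i = (\<Sum>k<N. c k * D k i)" for i
    using c(2) unfolding lin D_def
    by (simp add: right_diff_distrib sum_subtractf sum_distrib_right[symmetric])
  then have "l2_norm (\<lambda>i. cesaro T n y i - cesaro T n w i) \<le> (\<Sum>k<N. l2_norm (\<lambda>i. c k * D k i))"
    using l2_norm_sum_le[of "{..<N}" "\<lambda>k i. c k * D k i"] D l1_scale by simp
  also have "\<dots> \<le> (\<Sum>k<N. c k * (2 * real N * l2_norm y / real n))"
  proof (rule sum_mono)
    fix k assume "k \<in> {..<N}"
    then have "2 * real k * l2_norm y / real n \<le> 2 * real N * l2_norm y / real n"
      using l2_norm_nonneg[OF y] by (intro divide_right_mono mult_right_mono) auto
    then show "l2_norm (\<lambda>i. c k * D k i) \<le> c k * (2 * real N * l2_norm y / real n)"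
      using l2_norm_scale[OF D] l2_norm_cesaro_diff_funpow_le[OF n, of k] c(1)
      unfolding D_def by (metis abs_of_nonneg mult_left_mono order_trans)
  qed
  also have "\<dots> = 2 * real N * l2_norm y / real n"
    by (simp only: sum_distrib_right[symmetric] c(2) mult_1)
  finally have close: "l2_norm (\<lambda>i. cesaro T n y i - cesaro T n w i) \<le> 2 * real N * l2_norm y / real n" .
  have "l2_norm (cesaro T n y) \<le> l2_norm (cesaro T n w) + l2_norm (\<lambda>i. cesaro T n y i - cesaro T n w i)"
    using l2_norm_add_le[of "cesaro T n w" "\<lambda>i. cesaro T n y i - cesaro T n w i"]
      dunford_schwartz_l1[OF dunford_schwartz_cesaro[OF T]] w y l1_diff by simp
  also have "\<dots> \<le> l2_norm w + 2 * real N * l2_norm y / real n"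
    using close dunford_schwartz_l2_norm_le[OF dunford_schwartz_cesaro[OF T] w, of n] by linarith
  finally show ?thesis unfolding w_def .
qed

text \<open>The l2 norms of the averages approach the least norm on the convex hull of the orbit, so the
  averages are Cauchy by the previous lemma.\<close>

lemma cesaro_l2_Cauchy:
  assumes e: "0 < e"
  shows "\<exists>M. \<forall>m\<ge>M. \<forall>n\<ge>M. l2_norm (\<lambda>i. cesaro T m y i - cesaro T n y i) < e"
proof -
  define C where "C = orbit_hull T y"
  define d where "d = Inf (l2_norm ` C)"
  have C_l1: "C \<subseteq> l1" unfolding C_def by (rule orbit_hull_subset_l1)
  have d0: "0 \<le> d"
    unfolding d_def using cesaro_in_orbit_hull[of 1 T y] C_l1 l2_norm_nonneg
    by (intro cInf_greatest) (auto simp: C_def)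
  define \<delta> where "\<delta> = min 1 (e\<^sup>2 / (8 * (2 * d + 1)))"
  have \<delta>: "0 < \<delta>" "\<delta> \<le> 1" "\<delta> \<le> e\<^sup>2 / (8 * (2 * d + 1))" unfolding \<delta>_def using e d0 by auto
  obtain w where w: "w \<in> C" "l2_norm w < d + \<delta> / 2"
    using cInf_lessD[of "l2_norm ` C" "d + \<delta> / 2"] cesaro_in_orbit_hull[of 1 T y] \<delta>(1)
    unfolding d_def C_def by auto
  then obtain N c where c: "\<forall>k. 0 \<le> c k" "(\<Sum>k<N. c k) = 1" "w = (\<lambda>i. \<Sum>k<N. c k * (T ^^ k) y i)"
    unfolding C_def orbit_hull_def by blast
  define M where "M = nat \<lceil>4 * real N * l2_norm y / \<delta>\<rceil> + 1"
  have near_Inf: "l2_norm (cesaro T n y) \<le> d + \<delta>" if "M \<le> n" for n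
  proof -
    have n: "0 < n" using that unfolding M_def by simp
    have "4 * real N * l2_norm y / \<delta> < real n"
      using that real_nat_ceiling_ge[of "4 * real N * l2_norm y / \<delta>"] unfolding M_def by linarith
    then have "2 * real N * l2_norm y / real n \<le> \<delta> / 2"
      using n \<delta>(1) by (simp add: field_simps)
    then show ?thesis using l2_norm_cesaro_le[OF n c(1,2)] w(2)[unfolded c(3)] by linarith
  qed
  show ?thesis
  proof (intro exI allI impI)
    fix m n assume mn: "M \<le> m" "M \<le> n"
    then have "0 < m" "0 < n" unfolding M_def by auto
    then have "(l2_norm (\<lambda>i. cesaro T m y i - cesaro T n y i))\<^sup>2 \<le> 4 * \<delta> * (2 * d + \<delta>)"
      unfolding d_def
      by (intro l2_norm_diff_near_Inf[OF C_l1])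
        (use orbit_hull_midpoint cesaro_in_orbit_hull near_Inf mn in \<open>auto simp: C_def d_def\<close>)
    also have "\<dots> \<le> 4 * \<delta> * (2 * d + 1)" using \<delta> by (intro mult_left_mono) auto
    also have "\<dots> \<le> e\<^sup>2 / 2" using \<delta>(3) d0 by (simp add: field_simps)
    also have "\<dots> < e\<^sup>2" using e by simp
    finally show "l2_norm (\<lambda>i. cesaro T m y i - cesaro T n y i) < e"
      using e by (simp add: power_less_imp_less_base)
  qed
qed

end

section \<open>Cesaro averages of null sequences\<close>

lemma cesaro_uniformly_Cauchy:
  assumes T: "dunford_schwartz T" and x: "x \<longlonglongrightarrow> 0" and e: "0 < e"
  shows "\<exists>M. \<forall>m\<ge>M. \<forall>n\<ge>M. \<forall>i. \<bar>cesaro T m x i - cesaro T n x i\<bar> < e"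
proof -
  obtain y where y: "y \<in> l1" "\<And>i. \<bar>x i - y i\<bar> \<le> e / 3"
    using null_seq_approx_l1[OF x, of "e / 3"] e by auto
  have close: "\<bar>cesaro T n x i - cesaro T n y i\<bar> \<le> e / 3" for n i
    using dunford_schwartz_abs_diff_le[OF dunford_schwartz_cesaro[OF T] null_seq_in_linf[OF x]] y
      l1_subset_linf by blast
  obtain M where M: "\<forall>m\<ge>M. \<forall>n\<ge>M. l2_norm (\<lambda>i. cesaro T m y i - cesaro T n y i) < e / 3"
    using cesaro_l2_Cauchy[OF T y(1), of "e / 3"] e by auto
  have "\<bar>cesaro T m x i - cesaro T n x i\<bar> < e" if "M \<le> m" "M \<le> n" for m n i
  proof -
    have "(\<lambda>i. cesaro T m y i - cesaro T n y i) \<in> l1"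
      using dunford_schwartz_l1[OF dunford_schwartz_cesaro[OF T] y(1)] by (intro l1_diff)
    then have "\<bar>cesaro T m y i - cesaro T n y i\<bar> \<le> l2_norm (\<lambda>i. cesaro T m y i - cesaro T n y i)"
      by (rule abs_le_l2_norm)
    then have "\<bar>cesaro T m y i - cesaro T n y i\<bar> < e / 3" using M that by force
    then show ?thesis using close[of m i] close[of n i] by linarith
  qed
  then show ?thesis by blast
qed

lemma cesaro_uniform_limit:
  assumes T: "dunford_schwartz T" and x: "x \<longlonglongrightarrow> 0"
  obtains xh where "xh \<longlonglongrightarrow> 0" "\<And>e. 0 < e \<Longrightarrow> \<exists>M. \<forall>n\<ge>M. \<forall>i. \<bar>cesaro T n x i - xh i\<bar> < e"
proof -
  have "\<forall>e>0. \<exists>M. \<forall>m n i. M \<le> m \<and> M \<le> n \<and> True \<longrightarrow> dist (cesaro T m x i) (cesaro T n x i) < e"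
    using cesaro_uniformly_Cauchy[OF T x] by (simp add: dist_real_def) blast
  then obtain xh where "\<forall>e>0. \<exists>M. \<forall>n i. M \<le> n \<and> True \<longrightarrow> dist (cesaro T n x i) (xh i) < e"
    unfolding uniformly_convergent_eq_cauchy[symmetric] by blast
  then have xh: "\<And>e. 0 < e \<Longrightarrow> \<exists>M. \<forall>n\<ge>M. \<forall>i. \<bar>cesaro T n x i - xh i\<bar> < e"
    by (simp add: dist_real_def)
  have "xh \<longlonglongrightarrow> 0"
  proof (rule null_seq_if_uniform_approx)
    fix e :: real assume "0 < e"
    then obtain M where "\<And>i. \<bar>cesaro T M x i - xh i\<bar> < e" using xh by blast
    moreover have "cesaro T M x \<longlonglongrightarrow> 0" by (rule dunford_schwartz_null[OF dunford_schwartz_cesaro[OF T] x])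
    ultimately show "\<exists>y. y \<longlonglongrightarrow> 0 \<and> (\<forall>i. \<bar>xh i - y i\<bar> \<le> e)"
      by (metis abs_minus_commute less_imp_le)
  qed
  then show thesis using xh that by blast
qed

section \<open>Fully symmetric sequence spaces\<close>

text \<open>If x does not tend to 0, then |x| \<ge> a > 0 infinitely often, so every bounded sequence is
  dominated in rearrangement by a multiple of x and hence lies in E.\<close>

lemma null_seq_if_symmetric_seq_space_ne_linf:
  assumes sym: "symmetric_seq_space E N" and ne: "E \<noteq> linf" and x: "x \<in> E"
  shows "x \<longlonglongrightarrow> 0"
proof (rule ccontr)
  assume "\<not> x \<longlonglongrightarrow> 0"
  have E_linf: "E \<subseteq> linf" using sym unfolding symmetric_seq_space_def by simp
  have E_scale: "\<And>x c. x \<in> E \<Longrightarrow> (\<lambda>i. c * x i) \<in> E" using sym unfolding symmetric_seq_space_def by simp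
  have E_rearr: "\<And>y z. y \<in> E \<Longrightarrow> z \<in> linf \<Longrightarrow> (\<forall>k. rearr z k \<le> rearr y k) \<Longrightarrow> z \<in> E"
    using sym unfolding symmetric_seq_space_def by blast
  obtain a where a: "0 < a" "\<forall>M. \<exists>n\<ge>M. a \<le> \<bar>x n\<bar>"
    using \<open>\<not> x \<longlonglongrightarrow> 0\<close> unfolding LIMSEQ_iff by (auto simp: not_less)
  have inf: "infinite {i. a \<le> \<bar>x i\<bar>}"
    unfolding infinite_nat_iff_unbounded_le using a(2) by auto
  have "linf \<subseteq> E"
  proof
    fix z assume z: "z \<in> linf"
    define c where "c = (sup_norm z + 1) / a"
    have c: "0 < c" unfolding c_def using sup_norm_nonneg[OF z] a(1) by simp
    have "{i. a \<le> \<bar>x i\<bar>} \<subseteq> {i. sup_norm z + 1 \<le> \<bar>c * x i\<bar>}"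
    proof
      fix i assume "i \<in> {i. a \<le> \<bar>x i\<bar>}"
      then have "c * a \<le> c * \<bar>x i\<bar>" using c by simp
      moreover have "c * a = sup_norm z + 1" unfolding c_def using a(1) by simp
      ultimately show "i \<in> {i. sup_norm z + 1 \<le> \<bar>c * x i\<bar>}" using c by (simp add: abs_mult)
    qed
    then have "infinite {i. sup_norm z + 1 \<le> \<bar>c * x i\<bar>}" using inf finite_subset by blast
    then have big: "sup_norm z + 1 \<le> rearr (\<lambda>i. c * x i) k" for k
      using E_linf E_scale[OF x] by (intro le_rearr_if_infinite) auto
    have "rearr z k \<le> rearr (\<lambda>i. c * x i) k" for k
      using rearr_le_sup_norm[OF z, of k] big[of k] by linarith
    then show "z \<in> E" using E_rearr[OF E_scale[OF x] z] by blast
  qed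
  then show False using ne E_linf by blast
qed

theorem theorem1p1:
  fixes E :: "seq set" and N :: "seq \<Rightarrow> real" and T :: "seq \<Rightarrow> seq"
  assumes "fully_symmetric E N"
    and "E \<noteq> linf"
    and "dunford_schwartz T"
  shows "\<forall>x\<in>E. \<exists>xh\<in>E.
           (\<lambda>n. sup_norm (\<lambda>i. (\<Sum>k<n. (T ^^ k) x i) / real n - xh i)) \<longlonglongrightarrow> 0"
proof
  fix x assume "x \<in> E"
  have x: "x \<longlonglongrightarrow> 0"
    using null_seq_if_symmetric_seq_space_ne_linf assms(1,2) \<open>x \<in> E\<close>
    unfolding fully_symmetric_def by blast
  obtain xh where xh: "xh \<longlonglongrightarrow> 0" and
    unif: "\<And>e. 0 < e \<Longrightarrow> \<exists>M. \<forall>n\<ge>M. \<forall>i. \<bar>cesaro T n x i - xh i\<bar> < e"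
    using cesaro_uniform_limit[OF assms(3) x] by blast
  have "majorized xh x"
  proof (rule majorized_if_uniform_approx_by_dunford_schwartz[OF null_seq_in_linf[OF x] xh])
    fix e :: real assume "0 < e"
    then obtain M where "\<forall>i. \<bar>cesaro T M x i - xh i\<bar> < e" using unif by blast
    then show "\<exists>S. dunford_schwartz S \<and> (\<forall>i. \<bar>S x i - xh i\<bar> \<le> e)"
      using dunford_schwartz_cesaro[OF assms(3)] less_imp_le by blast
  qed
  then have "xh \<in> E"
    using assms(1) \<open>x \<in> E\<close> null_seq_in_linf[OF xh] unfolding fully_symmetric_def by blast
  moreover have "(\<lambda>n. sup_norm (\<lambda>i. cesaro T n x i - xh i)) \<longlonglongrightarrow> 0"
    by (rule sup_norm_diff_tendsto_zero[OF unif])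
  ultimately show "\<exists>xh\<in>E. (\<lambda>n. sup_norm (\<lambda>i. (\<Sum>k<n. (T ^^ k) x i) / real n - xh i)) \<longlonglongrightarrow> 0"
    unfolding cesaro_def by blast
qed

end
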